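(* Assume $\partial\Omega$ is $C^1$. For $x\in\bar\Omega$, let $$S_x=\{v\in\mathbb{R}^3\setminus\{0\}: v\cdot n(x_{\mathbf b}(x,v))=0\}.$$ Then $S_x$ has Lebesgue measure zero.
   Context: $\Omega=\{x\in\mathbb{R}^3:\xi(x)<0\}$ is connected and bounded, $\xi$ with $\nabla\xi\neq0$ on $\{\xi=0\}$, $n(x)=\nabla\xi(x)/|\nabla\xi(x)|$ the outward normal. For $x\in\bar\Omega$, $v\neq0$, the backward exit time is $t_{\mathbf b}(x,v)=\sup\{\tau\ge0: x-\tau v\in\bar\Omega\}$ and $x_{\mathbf b}(x,v)=x-t_{\mathbf b}(x,v)v\in\partial\Omega$. *)

theory Defs
  imports "HOL-Analysis.Analysis"
begin

definition t_b :: "(real^3) set \<Rightarrow> real^3 \<Rightarrow> real^3 \<Rightarrow> real" where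
  "t_b \<Omega> x v = Sup {\<tau>. \<tau> \<ge> 0 \<and> x - \<tau> *\<^sub>R v \<in> closure \<Omega>}"

definition x_b :: "(real^3) set \<Rightarrow> real^3 \<Rightarrow> real^3 \<Rightarrow> real^3" where
  "x_b \<Omega> x v = x - t_b \<Omega> x v *\<^sub>R v"

text \<open>Outward unit normal from a defining function with gradient field grad.\<close>

definition normal :: "(real^3 \<Rightarrow> real^3) \<Rightarrow> real^3 \<Rightarrow> real^3" where
  "normal grad y = grad y /\<^sub>R norm (grad y)"

end

theory Submission
  imports Defs
begin

text \<open>If \<open>v\<close> grazes the boundary at the backward exit point \<open>y = x_b(x,v)\<close>, then either
\<open>y = x\<close> and \<open>v\<close> lies in the tangent plane at \<open>x\<close>, or \<open>v\<close> is a positive multiple of a vector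
\<open>x - y\<close> tangent to \<open>{\<xi> = 0}\<close> at \<open>y\<close>. The directions of the second kind form a null set:
near a boundary point where \<open>\<nabla>\<xi> \<cdot> e \<ge> c > 0\<close>, each point \<open>z\<close> of the cylinder
\<open>{y + t e : \<xi>(y) = 0}\<close> splits uniquely as \<open>z = y + t e\<close>, the height \<open>t\<close> is a differentiable
function of \<open>z\<close> on the cylinder, and \<open>z \<mapsto> exp(t) (x - y)\<close> covers the tangential directions
while its derivative takes values in the plane \<open>\<nabla>\<xi>(y)\<^sup>\<bottom>\<close>. Sard's lemma for maps of
deficient rank, together with a countable cover of the boundary, yields the claim.\<close>

lemma increase_along_transversal_direction:
  fixes \<xi> :: "'a::real_inner \<Rightarrow> real" and grad :: "'a \<Rightarrow> 'a"
  assumes deriv: "\<And>y. (\<xi> has_derivative (\<lambda>h. grad y \<bullet> h)) (at y)"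
    and B: "convex B" and p: "p \<in> B" and q: "p + s *\<^sub>R e \<in> B" and s: "0 \<le> s"
    and transversal: "\<And>w. w \<in> B \<Longrightarrow> c \<le> grad w \<bullet> e"
  shows "\<xi> p + c * s \<le> \<xi> (p + s *\<^sub>R e)"
proof -
  define \<phi> where "\<phi> r = \<xi> (p + r *\<^sub>R e) - c * r" for r
  have \<phi>_deriv: "DERIV \<phi> r :> grad (p + r *\<^sub>R e) \<bullet> e - c" for r
  proof -
    have "((\<lambda>r. \<xi> (p + r *\<^sub>R e)) has_derivative (\<lambda>h. grad (p + r *\<^sub>R e) \<bullet> (h *\<^sub>R e))) (at r)"
      by (rule has_derivative_compose[OF _ deriv]) (auto intro!: derivative_eq_intros)
    then show ?thesis
      unfolding \<phi>_def has_field_derivative_def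
      by (auto intro!: derivative_eq_intros simp: algebra_simps)
  qed
  have on_segment: "p + r *\<^sub>R e \<in> B" if "0 < r" "r < s" for r
  proof -
    have "(1 - r/s) *\<^sub>R p + (r/s) *\<^sub>R (p + s *\<^sub>R e) \<in> B"
      using convexD[OF B p q, of "1 - r/s" "r/s"] that by simp
    then show ?thesis using that by (simp add: algebra_simps)
  qed
  have "\<phi> 0 \<le> \<phi> s"
  proof (rule DERIV_nonneg_imp_increasing_open[OF s])
    show "\<exists>y. DERIV \<phi> r :> y \<and> 0 \<le> y" if "0 < r" "r < s" for r
      using \<phi>_deriv transversal[OF on_segment[OF that]] diff_ge_0_iff_ge by blast
    show "continuous_on {0..s} \<phi>"
      using \<phi>_deriv DERIV_isCont continuous_at_imp_continuous_on by blast
  qed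
  then show ?thesis unfolding \<phi>_def by simp
qed

lemma separation_along_transversal_direction:
  fixes \<xi> :: "'a::real_inner \<Rightarrow> real" and grad :: "'a \<Rightarrow> 'a"
  assumes deriv: "\<And>y. (\<xi> has_derivative (\<lambda>h. grad y \<bullet> h)) (at y)"
    and B: "convex B" and p: "p \<in> B" and q: "p + s *\<^sub>R e \<in> B"
    and transversal: "\<And>w. w \<in> B \<Longrightarrow> c \<le> grad w \<bullet> e"
  shows "c * \<bar>s\<bar> \<le> \<bar>\<xi> (p + s *\<^sub>R e) - \<xi> p\<bar>"
proof (cases "0 \<le> s")
  case True
  then show ?thesis
    using increase_along_transversal_direction[OF deriv B p q _ transversal] by simp
next
  case False
  have "\<xi> (p + s *\<^sub>R e) + c * (- s) \<le> \<xi> (p + s *\<^sub>R e + (- s) *\<^sub>R e)"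
    using False by (intro increase_along_transversal_direction[OF deriv B q _ _ transversal])
      (simp_all add: p)
  then show ?thesis using False by simp
qed

definition tangential_directions :: "('a::real_inner \<Rightarrow> 'a) \<Rightarrow> 'a set \<Rightarrow> 'a \<Rightarrow> 'a set" where
  "tangential_directions grad \<Gamma> x = {s *\<^sub>R (x - y) | y s. y \<in> \<Gamma> \<and> (x - y) \<bullet> grad y = 0 \<and> 0 < s}"

locale transversal_patch =
  fixes \<xi> :: "'a::real_inner \<Rightarrow> real" and grad :: "'a \<Rightarrow> 'a"
    and B :: "'a set" and e :: 'a and c :: real
  assumes deriv: "\<And>y. (\<xi> has_derivative (\<lambda>h. grad y \<bullet> h)) (at y)"
    and open_B: "open B" and convex_B: "convex B"
    and norm_e: "norm e = 1" and c_pos: "0 < c"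
    and transversal: "\<And>w. w \<in> B \<Longrightarrow> c \<le> grad w \<bullet> e"
begin

definition patch :: "'a set" where
  "patch = {y \<in> B. \<xi> y = 0}"

definition cylinder :: "'a set" where
  "cylinder = {y + t *\<^sub>R e | y t. y \<in> patch}"

definition foot :: "'a \<Rightarrow> 'a" where
  "foot z = (SOME y. y \<in> patch \<and> (\<exists>t. z = y + t *\<^sub>R e))"

definition height :: "'a \<Rightarrow> real" where
  "height z = (z - foot z) \<bullet> e"

lemma inner_e_e [simp]: "e \<bullet> e = 1"
  using norm_e by (simp add: power2_norm_eq_inner[symmetric])

lemma deriv_approx:
  assumes "0 < \<epsilon>"
  obtains d where "0 < d"
    "\<And>y'. norm (y' - y) < d \<Longrightarrow> \<bar>\<xi> y' - \<xi> y - grad y \<bullet> (y' - y)\<bar> \<le> \<epsilon> * norm (y' - y)"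
  using deriv[of y] assms unfolding has_derivative_at_alt by force

lemma patch_line_unique:
  assumes "y \<in> patch" "y + t *\<^sub>R e \<in> patch"
  shows "t = 0"
proof -
  have "c * \<bar>t\<bar> \<le> \<bar>\<xi> (y + t *\<^sub>R e) - \<xi> y\<bar>"
    using assms unfolding patch_def
    by (intro separation_along_transversal_direction[OF deriv convex_B _ _ transversal]) auto
  then show ?thesis using assms c_pos unfolding patch_def by (simp add: mult_le_0_iff)
qed

lemma foot_height_decomp:
  assumes "z \<in> cylinder"
  shows "foot z \<in> patch" and "z = foot z + height z *\<^sub>R e"
proof -
  have "\<exists>y. y \<in> patch \<and> (\<exists>t. z = y + t *\<^sub>R e)" using assms unfolding cylinder_def by blast
  then have "foot z \<in> patch \<and> (\<exists>t. z = foot z + t *\<^sub>R e)"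
    unfolding foot_def by (rule someI_ex)
  then obtain t where "foot z \<in> patch" and z: "z = foot z + t *\<^sub>R e" by blast
  moreover have "height z = t" unfolding height_def by (subst z) simp
  ultimately show "foot z \<in> patch" "z = foot z + height z *\<^sub>R e" by simp_all
qed

lemma foot_height_line:
  assumes "y \<in> patch"
  shows "foot (y + t *\<^sub>R e) = y" and "height (y + t *\<^sub>R e) = t"
proof -
  let ?z = "y + t *\<^sub>R e"
  have z: "?z \<in> cylinder" using assms unfolding cylinder_def by blast
  have "foot ?z + (height ?z - t) *\<^sub>R e = y"
    using foot_height_decomp(2)[OF z] by (simp add: algebra_simps)
  then have "height ?z - t = 0"
    using patch_line_unique[OF foot_height_decomp(1)[OF z], of "height ?z - t"] assms by simp
  then show "height ?z = t" "foot ?z = y"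
    using foot_height_decomp(2)[OF z] by (simp_all add: algebra_simps)
qed

lemma cylinder_foot_lipschitz:
  assumes z: "z \<in> cylinder"
  obtains L d where "0 < L" "0 < d"
    "\<And>z'. z' \<in> cylinder \<Longrightarrow> norm (z' - z) < d \<Longrightarrow> norm (foot z' - foot z) \<le> L * norm (z' - z)"
proof -
  define y where "y = foot z"
  define a where "a = grad y"
  have y: "y \<in> B" "\<xi> y = 0" using foot_height_decomp(1)[OF z] unfolding y_def patch_def by auto
  obtain d0 where d0: "0 < d0" "ball y d0 \<subseteq> B" using open_B y(1) openE by blast
  obtain d1 where d1: "0 < d1"
    "\<And>y'. norm (y' - y) < d1 \<Longrightarrow> \<bar>\<xi> y' - \<xi> y - a \<bullet> (y' - y)\<bar> \<le> 1 * norm (y' - y)"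
    using deriv_approx[of 1 y] unfolding a_def by auto
  define M where "M = (norm a + 1) / c"
  have "0 \<le> M" unfolding M_def using c_pos by simp
  show thesis
  proof (rule that[of "1 + M" "min d0 d1"])
    fix z' assume z': "z' \<in> cylinder" and close: "norm (z' - z) < min d0 d1"
    define h where "h = z' - z"
    define \<sigma> where "\<sigma> = height z' - height z"
    have y': "foot z' \<in> B" "\<xi> (foot z') = 0"
      using foot_height_decomp(1)[OF z'] unfolding patch_def by auto
    have line: "foot z' + \<sigma> *\<^sub>R e = y + h"
      using foot_height_decomp(2)[OF z] foot_height_decomp(2)[OF z']
      unfolding h_def \<sigma>_def y_def by (simp add: algebra_simps)
    have "y + h \<in> ball y d0" using close by (simp add: h_def dist_norm norm_minus_commute)
    then have "y + h \<in> B" using d0(2) by blast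
    then have "c * \<bar>\<sigma>\<bar> \<le> \<bar>\<xi> (y + h)\<bar>"
      using separation_along_transversal_direction[OF deriv convex_B y'(1) _ transversal, of \<sigma>]
        line y'(2) by simp
    also have "\<dots> \<le> (norm a + 1) * norm h"
    proof -
      have "\<bar>\<xi> (y + h) - a \<bullet> h\<bar> \<le> norm h" using d1(2)[of "y + h"] close y(2) by (simp add: h_def)
      then show ?thesis using Cauchy_Schwarz_ineq2[of a h] by (simp add: algebra_simps)
    qed
    finally have "\<bar>\<sigma>\<bar> \<le> M * norm h"
      unfolding M_def using c_pos by (simp add: field_simps mult.commute)
    moreover have "foot z' - foot z = h - \<sigma> *\<^sub>R e" using line unfolding y_def by (simp add: algebra_simps)
    then have "norm (foot z' - foot z) \<le> norm h + \<bar>\<sigma>\<bar>"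
      using norm_triangle_ineq4[of h "\<sigma> *\<^sub>R e"] norm_e by simp
    ultimately show "norm (foot z' - foot z) \<le> (1 + M) * norm (z' - z)"
      unfolding h_def by (simp add: algebra_simps)
  qed (use \<open>0 \<le> M\<close> d0 d1 in auto)
qed

lemma height_has_derivative:
  assumes z: "z \<in> cylinder"
  shows "(height has_derivative (\<lambda>h. grad (foot z) \<bullet> h / (grad (foot z) \<bullet> e))) (at z within cylinder)"
proof -
  define y where "y = foot z"
  define a where "a = grad y"
  define k where "k = a \<bullet> e"
  have y: "y \<in> B" "\<xi> y = 0" using foot_height_decomp(1)[OF z] unfolding y_def patch_def by auto
  have "0 < k" using transversal[OF y(1)] c_pos unfolding k_def a_def by simp
  obtain L d where L: "0 < L" "0 < d"
    "\<And>z'. z' \<in> cylinder \<Longrightarrow> norm (z' - z) < d \<Longrightarrow> norm (foot z' - y) \<le> L * norm (z' - z)"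
    using cylinder_foot_lipschitz[OF z] unfolding y_def by blast
  have "\<exists>d>0. \<forall>z'\<in>cylinder. norm (z' - z) < d \<longrightarrow>
      norm (height z' - height z - a \<bullet> (z' - z) / k) \<le> \<epsilon> * norm (z' - z)" if "0 < \<epsilon>" for \<epsilon>
  proof -
    obtain d' where d': "0 < d'"
      "\<And>y'. norm (y' - y) < d' \<Longrightarrow> \<bar>\<xi> y' - \<xi> y - a \<bullet> (y' - y)\<bar> \<le> (\<epsilon> * k / L) * norm (y' - y)"
      using deriv_approx[of "\<epsilon> * k / L" y] \<open>0 < \<epsilon>\<close> \<open>0 < k\<close> L(1) unfolding a_def by auto
    have "norm (height z' - height z - a \<bullet> (z' - z) / k) \<le> \<epsilon> * norm (z' - z)"
      if z': "z' \<in> cylinder" and close: "norm (z' - z) < min d (d' / L)" for z'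
    proof -
      define h where "h = z' - z"
      define \<delta> where "\<delta> = foot z' - y"
      have \<delta>: "norm \<delta> \<le> L * norm h" using L(3)[OF z'] close unfolding \<delta>_def h_def by simp
      also have "\<dots> < d'" using close L(1) unfolding h_def by (simp add: field_simps)
      finally have "\<bar>a \<bullet> \<delta>\<bar> \<le> (\<epsilon> * k / L) * norm \<delta>"
        using d'(2)[of "foot z'"] y(2) foot_height_decomp(1)[OF z'] unfolding \<delta>_def patch_def by simp
      also have "\<dots> \<le> (\<epsilon> * k / L) * (L * norm h)"
        using \<delta> \<open>0 < \<epsilon>\<close> \<open>0 < k\<close> L(1) by (intro mult_left_mono) auto
      finally have small: "\<bar>a \<bullet> \<delta>\<bar> \<le> \<epsilon> * norm h * k" using L(1) by (simp add: mult_ac)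
      have "h = \<delta> + (height z' - height z) *\<^sub>R e"
        using foot_height_decomp(2)[OF z] foot_height_decomp(2)[OF z']
        unfolding h_def \<delta>_def y_def by (simp add: algebra_simps)
      then have "a \<bullet> h = a \<bullet> \<delta> + (height z' - height z) * k"
        unfolding k_def by (simp add: inner_add_right)
      then have "norm (height z' - height z - a \<bullet> h / k) = \<bar>a \<bullet> \<delta>\<bar> / k"
        using \<open>0 < k\<close> by (simp add: field_simps)
      also have "\<dots> \<le> \<epsilon> * norm h" using small \<open>0 < k\<close> by (simp add: divide_le_eq)
      finally show ?thesis unfolding h_def .
    qed
    then show ?thesis using L d' by (intro exI[of _ "min d (d' / L)"]) auto
  qed
  moreover have "bounded_linear (\<lambda>h. a \<bullet> h / k)"
    by (intro bounded_linear_compose[OF bounded_linear_divide bounded_linear_inner_right])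
  ultimately show ?thesis unfolding has_derivative_within_alt a_def k_def y_def by simp
qed

lemma cone_map_degenerate_derivative:
  assumes z: "z \<in> cylinder" and tangent: "(x - foot z) \<bullet> grad (foot z) = 0"
  obtains f' where "((\<lambda>z. exp (height z) *\<^sub>R (x - foot z)) has_derivative f') (at z within cylinder)"
    and "range f' \<subseteq> {w. grad (foot z) \<bullet> w = 0}"
proof -
  define a where "a = grad (foot z)"
  define Q where "Q h = a \<bullet> h / (a \<bullet> e)" for h
  define f' where "f' h = (Q h * exp (height z)) *\<^sub>R (x - (z - height z *\<^sub>R e))
      + exp (height z) *\<^sub>R (Q h *\<^sub>R e - h)" for h
  have "0 < a \<bullet> e"
    using transversal foot_height_decomp(1)[OF z] c_pos unfolding a_def patch_def by force
  \<comment> \<open>On the cylinder \<open>foot z = z - height z *\<^sub>R e\<close>, so only \<open>height\<close> needs differentiating.\<close>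
  have "((\<lambda>z. exp (height z) *\<^sub>R (x - (z - height z *\<^sub>R e))) has_derivative f') (at z within cylinder)"
    using height_has_derivative[OF z] unfolding f'_def Q_def a_def
    by (auto intro!: derivative_eq_intros simp: algebra_simps)
  then have "((\<lambda>z. exp (height z) *\<^sub>R (x - foot z)) has_derivative f') (at z within cylinder)"
  proof (rule has_derivative_transform_within[OF _ zero_less_one z])
    show "exp (height z') *\<^sub>R (x - (z' - height z' *\<^sub>R e)) = exp (height z') *\<^sub>R (x - foot z')"
      if "z' \<in> cylinder" for z'
      using foot_height_decomp(2)[OF that] by (metis add_diff_cancel)
  qed
  moreover have "a \<bullet> f' h = 0" for h
  proof -
    have "z - height z *\<^sub>R e = foot z"
      using foot_height_decomp(2)[OF z] by (metis add_diff_cancel)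
    then have "a \<bullet> (x - (z - height z *\<^sub>R e)) = 0"
      using tangent unfolding a_def by (simp add: inner_commute)
    moreover have "a \<bullet> (Q h *\<^sub>R e - h) = 0"
      using \<open>0 < a \<bullet> e\<close> unfolding Q_def by (simp add: inner_diff_right)
    ultimately show ?thesis unfolding f'_def by (simp add: inner_add_right)
  qed
  ultimately show thesis using that unfolding a_def by blast
qed

end

lemma rank_matrix_less_of_range_in_hyperplane:
  fixes f :: "real^'n \<Rightarrow> real^'n" and a :: "real^'n"
  assumes "linear f" and "a \<noteq> 0" and "range f \<subseteq> {w. a \<bullet> w = 0}"
  shows "rank (matrix f) < CARD('n)"
proof -
  have "dim (range f) \<le> CARD('n) - 1"
    using dim_subset[OF assms(3)] dim_hyperplane[OF assms(2)] by simp
  then have "dim (range f) < CARD('n)"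
    using zero_less_card_finite[where 'a='n] by arith
  moreover have "rank (matrix f) = dim (range f)"
    unfolding rank_dim_range using assms(1) by (simp add: matrix_vector_mul(3))
  ultimately show ?thesis by simp
qed

lemma negligible_tangential_directions_patch:
  fixes \<xi> :: "real^'n::{finite,wellorder} \<Rightarrow> real"
    and grad :: "real^'n::{finite,wellorder} \<Rightarrow> real^'n::{finite,wellorder}"
  assumes "transversal_patch \<xi> grad B e c"
  shows "negligible (tangential_directions grad {y \<in> B. \<xi> y = 0} x)"
proof -
  interpret transversal_patch \<xi> grad B e c by fact
  define T where "T = {y + t *\<^sub>R e | y t. y \<in> patch \<and> (x - y) \<bullet> grad y = 0}"
  define f where "f z = exp (height z) *\<^sub>R (x - foot z)" for z
  have T_cylinder: "T \<subseteq> cylinder" unfolding T_def cylinder_def by blast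
  have "tangential_directions grad patch x \<subseteq> f ` T"
  proof
    fix v assume "v \<in> tangential_directions grad patch x"
    then obtain y s where y: "y \<in> patch" "(x - y) \<bullet> grad y = 0"
      and "0 < s" and v: "v = s *\<^sub>R (x - y)"
      unfolding tangential_directions_def by blast
    then have "f (y + ln s *\<^sub>R e) = v" unfolding f_def foot_height_line[OF y(1)] by simp
    moreover have "y + ln s *\<^sub>R e \<in> T" using y unfolding T_def by blast
    ultimately show "v \<in> f ` T" by blast
  qed
  moreover have "\<exists>f'. (f has_derivative f') (at z within T) \<and> rank (matrix f') < CARD('n)"
    if "z \<in> T" for z
  proof -
    have z: "z \<in> cylinder" "(x - foot z) \<bullet> grad (foot z) = 0"
      using that foot_height_line unfolding T_def cylinder_def by auto
    obtain f' where f': "(f has_derivative f') (at z within cylinder)"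
      and range: "range f' \<subseteq> {w. grad (foot z) \<bullet> w = 0}"
      using cone_map_degenerate_derivative[OF z] unfolding f_def by blast
    have "grad (foot z) \<noteq> 0"
      using transversal foot_height_decomp(1)[OF z(1)] c_pos unfolding patch_def by force
    then have "rank (matrix f') < CARD('n)"
      using rank_matrix_less_of_range_in_hyperplane range
        has_derivative_linear[OF f'] by blast
    then show ?thesis using has_derivative_subset[OF f' T_cylinder] by auto
  qed
  then obtain f' where "\<And>z. z \<in> T \<Longrightarrow>
      (f has_derivative f' z) (at z within T) \<and> rank (matrix (f' z)) < CARD('n)"
    by metis
  then have "negligible (f ` T)" by (intro baby_Sard) auto
  ultimately show ?thesis using negligible_subset unfolding patch_def by blast
qed

lemma transversal_patch_ball:
  fixes \<xi> :: "'a::real_inner \<Rightarrow> real" and grad :: "'a \<Rightarrow> 'a"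
  assumes deriv: "\<And>y. (\<xi> has_derivative (\<lambda>h. grad y \<bullet> h)) (at y)"
    and cont: "isCont grad y" and nonzero: "grad y \<noteq> 0"
  obtains r where "0 < r"
    "transversal_patch \<xi> grad (ball y r) (grad y /\<^sub>R norm (grad y)) (norm (grad y) / 2)"
proof -
  define e where "e = grad y /\<^sub>R norm (grad y)"
  define c where "c = norm (grad y) / 2"
  have "0 < c" unfolding c_def using nonzero by simp
  then obtain r where "0 < r" and r: "\<And>w. dist w y < r \<Longrightarrow> dist (grad w) (grad y) < c"
    using cont unfolding continuous_at_eps_delta by blast
  have "c \<le> grad w \<bullet> e" if "w \<in> ball y r" for w
  proof -
    have "grad y \<bullet> e = 2 * c"
      unfolding e_def c_def using nonzero by (simp add: power2_norm_eq_inner[symmetric] power2_eq_square)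
    moreover have "\<bar>(grad w - grad y) \<bullet> e\<bar> \<le> norm (grad w - grad y)"
      using Cauchy_Schwarz_ineq2[of "grad w - grad y" e] nonzero unfolding e_def by simp
    moreover have "norm (grad w - grad y) < c"
      using r[of w] that by (simp add: dist_norm norm_minus_commute)
    ultimately show ?thesis by (simp add: inner_diff_left)
  qed
  then have "transversal_patch \<xi> grad (ball y r) e c"
    using deriv \<open>0 < c\<close> nonzero unfolding transversal_patch_def e_def by auto
  with \<open>0 < r\<close> show thesis unfolding e_def c_def by (rule that)
qed

lemma negligible_tangential_directions_level_set:
  fixes \<xi> :: "real^'n::{finite,wellorder} \<Rightarrow> real"
    and grad :: "real^'n::{finite,wellorder} \<Rightarrow> real^'n::{finite,wellorder}"
  assumes deriv: "\<And>y. (\<xi> has_derivative (\<lambda>h. grad y \<bullet> h)) (at y)"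
    and C1: "continuous_on UNIV grad"
    and nondeg: "\<And>y. \<xi> y = 0 \<Longrightarrow> grad y \<noteq> 0"
  shows "negligible (tangential_directions grad {y. \<xi> y = 0} x)"
proof -
  define F where "F = {B. \<exists>e c. transversal_patch \<xi> grad B e c}"
  have "open B" if "B \<in> F" for B
    using that unfolding F_def by (auto dest: transversal_patch.open_B)
  then obtain F' where F': "F' \<subseteq> F" "countable F'" "\<Union>F' = \<Union>F"
    by (rule Lindelof)
  have level_set_covered: "\<exists>B\<in>F'. y \<in> B" if y: "\<xi> y = 0" for y
  proof -
    have "isCont grad y" using C1 by (simp add: continuous_on_eq_continuous_at)
    then obtain r where "0 < r" and "ball y r \<in> F"
      unfolding F_def by (rule transversal_patch_ball[OF deriv _ nondeg[OF y]]) blast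
    then have "y \<in> \<Union>F" by (meson UnionI centre_in_ball)
    then show ?thesis using F'(3) by blast
  qed
  have "tangential_directions grad {y. \<xi> y = 0} x
      \<subseteq> (\<Union>B\<in>F'. tangential_directions grad {y \<in> B. \<xi> y = 0} x)"
  proof
    fix v assume "v \<in> tangential_directions grad {y. \<xi> y = 0} x"
    then obtain y s where y: "\<xi> y = 0" "(x - y) \<bullet> grad y = 0" "0 < s" "v = s *\<^sub>R (x - y)"
      unfolding tangential_directions_def by blast
    obtain B where "B \<in> F'" "y \<in> B" using level_set_covered[OF y(1)] by blast
    moreover have "v \<in> tangential_directions grad {y \<in> B. \<xi> y = 0} x"
      using y \<open>y \<in> B\<close> unfolding tangential_directions_def by blast
    ultimately show "v \<in> (\<Union>B\<in>F'. tangential_directions grad {y \<in> B. \<xi> y = 0} x)" by blast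
  qed
  moreover have "negligible (\<Union>B\<in>F'. tangential_directions grad {y \<in> B. \<xi> y = 0} x)"
  proof (intro negligible_countable_Union countable_image F'(2))
    show "negligible S" if "S \<in> (\<lambda>B. tangential_directions grad {y \<in> B. \<xi> y = 0} x) ` F'" for S
      using that F'(1) negligible_tangential_directions_patch unfolding F_def by blast
  qed
  ultimately show ?thesis by (rule negligible_subset[rotated])
qed

lemma bdd_above_exit_times:
  fixes x v :: "'a::real_normed_vector"
  assumes "bounded \<Omega>" and "v \<noteq> 0"
  shows "bdd_above {\<tau>. 0 \<le> \<tau> \<and> x - \<tau> *\<^sub>R v \<in> closure \<Omega>}"
proof -
  obtain R where R: "\<And>y. y \<in> closure \<Omega> \<Longrightarrow> norm y \<le> R"
    using bounded_closure[OF assms(1)] unfolding bounded_iff by blast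
  have "\<tau> \<le> (norm x + R) / norm v" if "0 \<le> \<tau>" "x - \<tau> *\<^sub>R v \<in> closure \<Omega>" for \<tau>
  proof -
    have "\<tau> * norm v = norm (x - (x - \<tau> *\<^sub>R v))" using that(1) by simp
    also have "\<dots> \<le> norm x + norm (x - \<tau> *\<^sub>R v)" by (rule norm_triangle_ineq4)
    also have "\<dots> \<le> norm x + R" using R[OF that(2)] by simp
    finally show ?thesis using assms(2) by (simp add: field_simps)
  qed
  then show ?thesis unfolding bdd_above_def by blast
qed

lemma t_b_maximal:
  assumes "bounded \<Omega>" and "v \<noteq> 0" and "0 \<le> \<tau>" and "x - \<tau> *\<^sub>R v \<in> closure \<Omega>"
  shows "\<tau> \<le> t_b \<Omega> x v"
  unfolding t_b_def
  by (rule cSup_upper) (use assms bdd_above_exit_times[OF assms(1,2)] in simp_all)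

lemma t_b_attained:
  assumes "bounded \<Omega>" and "x \<in> closure \<Omega>" and "v \<noteq> 0"
  shows "0 \<le> t_b \<Omega> x v" and "x_b \<Omega> x v \<in> closure \<Omega>"
proof -
  let ?A = "{\<tau>. 0 \<le> \<tau> \<and> x - \<tau> *\<^sub>R v \<in> closure \<Omega>}"
  have "?A = {0..} \<inter> (\<lambda>\<tau>. x - \<tau> *\<^sub>R v) -` closure \<Omega>" by auto
  also have "closed \<dots>"
    by (intro closed_Int closed_atLeast continuous_closed_vimage closed_closure continuous_intros)
  finally have "Sup ?A \<in> ?A"
    by (rule closed_contains_Sup[OF _ bdd_above_exit_times[OF assms(1,3)], rotated])
      (use assms(2) in force)
  then show "0 \<le> t_b \<Omega> x v" "x_b \<Omega> x v \<in> closure \<Omega>" unfolding x_b_def t_b_def by simp_all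
qed

lemma x_b_in_level_set:
  fixes \<xi> :: "real^3 \<Rightarrow> real"
  assumes cont: "continuous_on UNIV \<xi>" and \<Omega>: "\<Omega> = {y. \<xi> y < 0}"
    and "bounded \<Omega>" and "x \<in> closure \<Omega>" and "v \<noteq> 0"
  shows "\<xi> (x_b \<Omega> x v) = 0"
proof -
  have "closure \<Omega> \<subseteq> {y. \<xi> y \<le> 0}"
    unfolding \<Omega> by (intro closure_minimal closed_Collect_le cont continuous_intros) auto
  then have "\<xi> (x_b \<Omega> x v) \<le> 0" using t_b_attained(2)[OF assms(3-5)] by auto
  moreover have "\<not> \<xi> (x_b \<Omega> x v) < 0"
  proof
    let ?t = "t_b \<Omega> x v"
    assume neg: "\<xi> (x_b \<Omega> x v) < 0"
    have "continuous_on UNIV (\<lambda>\<tau>. \<xi> (x - \<tau> *\<^sub>R v))"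
      by (intro continuous_on_compose2[OF cont] continuous_intros) auto
    then have "isCont (\<lambda>\<tau>. \<xi> (x - \<tau> *\<^sub>R v)) ?t"
      by (simp add: continuous_on_eq_continuous_at)
    then have "((\<lambda>\<tau>. \<xi> (x - \<tau> *\<^sub>R v)) \<longlongrightarrow> \<xi> (x_b \<Omega> x v)) (at_right ?t)"
      unfolding isCont_def x_b_def by (rule tendsto_within_subset) simp
    from order_tendstoD(2)[OF this neg]
    have "\<forall>\<^sub>F \<tau> in at_right ?t. \<xi> (x - \<tau> *\<^sub>R v) < 0" .
    then have "\<forall>\<^sub>F \<tau> in at_right ?t. ?t < \<tau> \<and> \<xi> (x - \<tau> *\<^sub>R v) < 0"
      using eventually_at_right_less by (rule eventually_conj[rotated])
    then obtain \<tau> where "?t < \<tau>" and "x - \<tau> *\<^sub>R v \<in> \<Omega>"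
      using eventually_happens[of _ "at_right ?t"] unfolding \<Omega> by auto
    moreover have "0 \<le> \<tau>" using \<open>?t < \<tau>\<close> t_b_attained(1)[OF assms(3-5)] by simp
    ultimately have "\<tau> \<le> ?t"
      using t_b_maximal[OF assms(3,5)] closure_subset by blast
    with \<open>?t < \<tau>\<close> show False by simp
  qed
  ultimately show ?thesis by simp
qed

lemma grazing_exit_direction:
  fixes \<xi> :: "real^3 \<Rightarrow> real" and grad :: "real^3 \<Rightarrow> real^3"
  assumes cont: "continuous_on UNIV \<xi>" and nondeg: "\<And>y. \<xi> y = 0 \<Longrightarrow> grad y \<noteq> 0"
    and \<Omega>: "\<Omega> = {y. \<xi> y < 0}" and "bounded \<Omega>" and "x \<in> closure \<Omega>"
    and "v \<noteq> 0" and grazing: "v \<bullet> normal grad (x_b \<Omega> x v) = 0"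
  shows "v \<in> {v. \<xi> x = 0 \<and> grad x \<bullet> v = 0} \<union> tangential_directions grad {y. \<xi> y = 0} x"
proof -
  define t where "t = t_b \<Omega> x v"
  define y where "y = x_b \<Omega> x v"
  have y: "\<xi> y = 0" and "0 \<le> t"
    using x_b_in_level_set[OF cont \<Omega> assms(4-6)] t_b_attained(1)[OF assms(4-6)]
    unfolding y_def t_def by simp_all
  have "grad y \<bullet> v = 0"
    using grazing nondeg[OF y] unfolding normal_def y_def[symmetric] by (simp add: inner_commute)
  have x: "x = y + t *\<^sub>R v" unfolding y_def t_def x_b_def by simp
  show ?thesis
  proof (cases "t = 0")
    case True
    then show ?thesis using x y \<open>grad y \<bullet> v = 0\<close> by simp
  next
    case False
    then have "v = (1 / t) *\<^sub>R (x - y)" and "(x - y) \<bullet> grad y = 0" and "0 < 1 / t"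
      using x \<open>0 \<le> t\<close> \<open>grad y \<bullet> v = 0\<close> by (simp_all add: inner_commute)
    then have "v \<in> tangential_directions grad {y. \<xi> y = 0} x"
      unfolding tangential_directions_def using y by blast
    then show ?thesis by simp
  qed
qed

theorem mainTheorem12:
  fixes \<xi> :: "real^3 \<Rightarrow> real" and grad :: "real^3 \<Rightarrow> real^3"
    and \<Omega> :: "(real^3) set" and x :: "real^3"
  assumes deriv: "\<And>y. (\<xi> has_derivative (\<lambda>h. grad y \<bullet> h)) (at y)"
    and C1: "continuous_on UNIV grad"
    and nondeg: "\<And>y. \<xi> y = 0 \<Longrightarrow> grad y \<noteq> 0"
    and Omega_def: "\<Omega> = {y. \<xi> y < 0}"
    and conn: "connected \<Omega>"
    and bdd: "bounded \<Omega>"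
    and x_in: "x \<in> closure \<Omega>"
  shows "{v. v \<noteq> 0 \<and> v \<bullet> normal grad (x_b \<Omega> x v) = 0} \<in> null_sets lebesgue"
proof -
  have cont: "continuous_on UNIV \<xi>"
    using deriv has_derivative_continuous continuous_at_imp_continuous_on by blast
  have "negligible {v. \<xi> x = 0 \<and> grad x \<bullet> v = 0}"
    using negligible_hyperplane[of "grad x" 0] nondeg by (cases "\<xi> x = 0") auto
  then have "negligible ({v. \<xi> x = 0 \<and> grad x \<bullet> v = 0} \<union> tangential_directions grad {y. \<xi> y = 0} x)"
    using negligible_tangential_directions_level_set[OF deriv C1 nondeg] by (rule negligible_Un)
  moreover have "{v. v \<noteq> 0 \<and> v \<bullet> normal grad (x_b \<Omega> x v) = 0}
      \<subseteq> {v. \<xi> x = 0 \<and> grad x \<bullet> v = 0} \<union> tangential_directions grad {y. \<xi> y = 0} x"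
    using grazing_exit_direction[where grad = grad, OF cont nondeg Omega_def bdd x_in] by blast
  ultimately show ?thesis
    unfolding negligible_iff_null_sets[symmetric] by (rule negligible_subset)
qed

end
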